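(* Let a sequence $b_1,b_2,\dots$ be encoded by a causal linear time-invariant code that is $(R,\beta)$-anytime reliable (with $d_o=0$) over the packet erasure channel, and decoded by the erasure decoder, as described in the context. Let $1\le\tau_1'\le\tau_1<\tau_2'\le\tau_2$ be integers (so the intervals $[\tau_1',\tau_1]$ and $[\tau_2',\tau_2]$ are disjoint). Then $$P\big(Y(\tau_1',\tau_1)\cap Y(\tau_2',\tau_2)\big)\le 2^{-\beta\left((\tau_1-\tau_1'+1)+(\tau_2-\tau_2'+1)\right)},$$ where the probability is over the channel erasures only.
   Context: Packets are elements of $\mathbb F_2^{\Lambda}$. A causal linear time-invariant code maps information blocks $b_t\in\mathbb F_2^{a}$ ($t\ge1$) to channel blocks $c_t=G_1b_t+G_2b_{t-1}+\dots+G_tb_1\in\mathbb F_2^{n\Lambda}$, consisting of $n$ packets, with fixed matrices $G_i$ over $\mathbb F_2$. Each transmitted packet is independently erased with probability $p$ and otherwise received correctly. At each time $t$ the decoder, using all unerased packets received up to time $t$, produces estimates $\hat b_{\tau|t}$, $1\le\tau\le t$: $\hat b_{\tau|t}=b_\tau$ if $b_\tau$ is uniquely determined by the received packets (i.e. it takes the same value in every input sequence consistent with them), and otherwise $\hat b_{\tau|t}$ is declared an erasure (counted as $\hat b_{\tau|t}\neq b_\tau$). The code is $(R,\beta)$-anytime reliable (with $d_o=0$) if for every input sequence and all $1\le\tau\le t$, $P(\hat b_{\tau|t}\ne b_\tau)\le 2^{-\beta(t-\tau+1)}$. For $1\le\tau'\le\tau$, $Y(\tau',\tau)$ denotes the event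 that at decoding time $\tau$ the earliest decoding error is at position $\tau'$: $\hat b_{\ell|\tau}=b_\ell$ for all $\ell<\tau'$ and $\hat b_{\tau'|\tau}\ne b_{\tau'}$. *)

theory Defs
  imports "HOL-Probability.Probability" "HOL-Library.Z2"
begin

text \<open>F_2 is the field type bit. An information sequence is
  b :: nat \<Rightarrow> nat \<Rightarrow> bit, where b t k (t \<ge> 1, k < a) is coordinate k of the block b_t.
  The code is given by G :: nat \<Rightarrow> nat \<Rightarrow> nat \<Rightarrow> bit, where G i r k (i \<ge> 1, r < n*Lambda, k < a)
  is entry (r,k) of the (n Lambda) x a matrix G_i. Packet j (j < n) of channel block c_t
  consists of the rows j*Lambda ..< (j+1)*Lambda. An erasure pattern is
  e :: nat \<times> nat \<Rightarrow> bool, with e (s,j) = True meaning packet j at time s is erased.\<close>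

definition encode :: "(nat \<Rightarrow> nat \<Rightarrow> nat \<Rightarrow> bit) \<Rightarrow> nat \<Rightarrow> nat \<Rightarrow> (nat \<Rightarrow> nat \<Rightarrow> bit) \<Rightarrow> nat \<Rightarrow> bit"
  where "encode G a t b = (\<lambda>r. \<Sum>i\<in>{1..t}. \<Sum>k<a. G i r k * b (t - i + 1) k)"

definition consistent ::
  "(nat \<Rightarrow> nat \<Rightarrow> nat \<Rightarrow> bit) \<Rightarrow> nat \<Rightarrow> nat \<Rightarrow> nat \<Rightarrow> nat \<Rightarrow> (nat \<Rightarrow> nat \<Rightarrow> bit)
     \<Rightarrow> (nat \<times> nat \<Rightarrow> bool) \<Rightarrow> (nat \<Rightarrow> nat \<Rightarrow> bit) \<Rightarrow> bool"
  where "consistent G a n Lambda t b e b' \<longleftrightarrow>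
    (\<forall>s\<in>{1..t}. \<forall>j<n. \<not> e (s, j) \<longrightarrow>
       (\<forall>r\<in>{j * Lambda..<(j + 1) * Lambda}. encode G a s b' r = encode G a s b r))"

text \<open>The erasure decoder at time t outputs b_tau correctly iff b_tau is uniquely
  determined by the received packets.\<close>
definition dec_correct ::
  "(nat \<Rightarrow> nat \<Rightarrow> nat \<Rightarrow> bit) \<Rightarrow> nat \<Rightarrow> nat \<Rightarrow> nat \<Rightarrow> (nat \<Rightarrow> nat \<Rightarrow> bit)
     \<Rightarrow> (nat \<times> nat \<Rightarrow> bool) \<Rightarrow> nat \<Rightarrow> nat \<Rightarrow> bool"
  where "dec_correct G a n Lambda b e tau t \<longleftrightarrow>
    (\<forall>b'. consistent G a n Lambda t b e b' \<longrightarrow> (\<forall>k<a. b' tau k = b tau k))"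

definition erasure_space :: "real \<Rightarrow> (nat \<times> nat \<Rightarrow> bool) measure"
  where "erasure_space p = PiM UNIV (\<lambda>_. measure_pmf (bernoulli_pmf p))"

definition anytime_reliable ::
  "(nat \<Rightarrow> nat \<Rightarrow> nat \<Rightarrow> bit) \<Rightarrow> nat \<Rightarrow> nat \<Rightarrow> nat \<Rightarrow> real \<Rightarrow> real \<Rightarrow> bool"
  where "anytime_reliable G a n Lambda p \<beta> \<longleftrightarrow>
    (\<forall>b tau t. 1 \<le> tau \<and> tau \<le> t \<longrightarrow>
       measure (erasure_space p) {e \<in> space (erasure_space p). \<not> dec_correct G a n Lambda b e tau t}
         \<le> 2 powr (- \<beta> * real (t - tau + 1)))"

definition Y_event ::
  "(nat \<Rightarrow> nat \<Rightarrow> nat \<Rightarrow> bit) \<Rightarrow> nat \<Rightarrow> nat \<Rightarrow> nat \<Rightarrow> (nat \<Rightarrow> nat \<Rightarrow> bit)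
     \<Rightarrow> nat \<Rightarrow> nat \<Rightarrow> (nat \<times> nat \<Rightarrow> bool) set"
  where "Y_event G a n Lambda b tau' tau =
    {e. (\<forall>l. 1 \<le> l \<and> l < tau' \<longrightarrow> dec_correct G a n Lambda b e l tau)
        \<and> \<not> dec_correct G a n Lambda b e tau' tau}"

end

theory Submission
  imports Defs
begin

(* On Y(tau1',tau1) \<inter> Y(tau2',tau2) two failures occur:
   (1) b_tau1' is not decoded at time tau1, an event determined by the erasures of
       times 1..tau1;
   (2) b_tau2' is not decoded at time tau2 although all earlier blocks are.  By
       causality, once b_1..b_(tau2'-1) are known the packets of times < tau2' carry
       no further information, so (2) implies a "window decoding failure": b_tau2'
       is not determined by b_1..b_(tau2'-1) together with the packets received at
       times tau2'..tau2.  This event is determined by the erasures of those times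
       only, and it is contained in the ordinary decoding failure of b_tau2' at
       time tau2, hence has probability at most 2^(-beta (tau2-tau2'+1)).
   Since the two coordinate windows are disjoint and the erasures are independent,
   the probability of (1) \<inter> (2) factorises. *)

definition determined_by :: "'i set \<Rightarrow> (('i \<Rightarrow> 'a) \<Rightarrow> bool) \<Rightarrow> bool" where
  "determined_by J P \<longleftrightarrow> (\<forall>e e'. (\<forall>x\<in>J. e x = e' x) \<longrightarrow> P e = P e')"

lemma determined_by_Not [simp]: "determined_by J (\<lambda>e. \<not> P e) = determined_by J P"
  unfolding determined_by_def by blast

lemma dec_correct_determined:
  "determined_by ({1..t} \<times> {..<n}) (\<lambda>e. dec_correct G a n Lambda b e tau t)"
  unfolding determined_by_def dec_correct_def consistent_def by auto

lemma encode_causal: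
  assumes "\<And>l k. 1 \<le> l \<Longrightarrow> l < t \<Longrightarrow> k < a \<Longrightarrow> b' l k = b l k" and "s < t"
  shows "encode G a s b' = encode G a s b"
  using assms unfolding encode_def by (intro ext sum.cong refl) auto

definition window_decodes ::
  "(nat \<Rightarrow> nat \<Rightarrow> nat \<Rightarrow> bit) \<Rightarrow> nat \<Rightarrow> nat \<Rightarrow> nat \<Rightarrow> (nat \<Rightarrow> nat \<Rightarrow> bit)
     \<Rightarrow> (nat \<times> nat \<Rightarrow> bool) \<Rightarrow> nat \<Rightarrow> nat \<Rightarrow> bool" where
  "window_decodes G a n Lambda b e t' t \<longleftrightarrow>
    (\<forall>b'. (\<forall>l k. 1 \<le> l \<longrightarrow> l < t' \<longrightarrow> k < a \<longrightarrow> b' l k = b l k)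
       \<and> (\<forall>s\<in>{t'..t}. \<forall>j<n. \<not> e (s, j) \<longrightarrow>
            (\<forall>r\<in>{j * Lambda..<(j + 1) * Lambda}. encode G a s b' r = encode G a s b r))
      \<longrightarrow> (\<forall>k<a. b' t' k = b t' k))"

lemma window_decodes_determined:
  "determined_by ({t'..t} \<times> {..<n}) (\<lambda>e. window_decodes G a n Lambda b e t' t)"
  unfolding determined_by_def window_decodes_def by auto

text \<open>Window decoding is easier than ordinary decoding: it is given the earlier blocks,
  from which the earlier packets can be recomputed.\<close>
lemma dec_correct_imp_window_decodes:
  assumes "dec_correct G a n Lambda b e t' t"
  shows "window_decodes G a n Lambda b e t' t"
  unfolding window_decodes_def
proof (rule allI, rule impI)
  fix b' assume h: "(\<forall>l k. 1 \<le> l \<longrightarrow> l < t' \<longrightarrow> k < a \<longrightarrow> b' l k = b l k)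
       \<and> (\<forall>s\<in>{t'..t}. \<forall>j<n. \<not> e (s, j) \<longrightarrow>
            (\<forall>r\<in>{j * Lambda..<(j + 1) * Lambda}. encode G a s b' r = encode G a s b r))"
  have early: "encode G a s b' = encode G a s b" if "s < t'" for s
    using h that by (intro encode_causal) auto
  have "consistent G a n Lambda t b e b'"
    unfolding consistent_def
  proof (intro ballI allI impI)
    fix s j r
    assume "s \<in> {1..t}" "j < n" "\<not> e (s, j)" "r \<in> {j * Lambda..<(j + 1) * Lambda}"
    then show "encode G a s b' r = encode G a s b r"
      using h early by (cases "s < t'") auto
  qed
  then show "\<forall>k<a. b' t' k = b t' k" using assms unfolding dec_correct_def by blast
qed

text \<open>Conversely, if all blocks before t' are decoded at time t, the ordinary decoder
  succeeds on b_t' as soon as window decoding does; so Y(t',t) forces a window failure.\<close>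
lemma Y_event_imp_window_failure:
  assumes "e \<in> Y_event G a n Lambda b t' t"
  shows "\<not> window_decodes G a n Lambda b e t' t"
proof
  assume win: "window_decodes G a n Lambda b e t' t"
  have "dec_correct G a n Lambda b e t' t"
    unfolding dec_correct_def
  proof (intro allI impI)
    fix b' k assume c: "consistent G a n Lambda t b e b'" and k: "k < a"
    have "\<forall>l k. 1 \<le> l \<longrightarrow> l < t' \<longrightarrow> k < a \<longrightarrow> b' l k = b l k"
      using assms c unfolding Y_event_def dec_correct_def by blast
    moreover have "encode G a 0 b' = encode G a 0 b"
      by (simp add: encode_def)
    then have "\<forall>s\<in>{t'..t}. \<forall>j<n. \<not> e (s, j) \<longrightarrow>
        (\<forall>r\<in>{j * Lambda..<(j + 1) * Lambda}. encode G a s b' r = encode G a s b r)"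
      using c unfolding consistent_def
      by (metis atLeastAtMost_iff less_one linorder_not_le)
    ultimately show "b' t' k = b t' k" using win k unfolding window_decodes_def by blast
  qed
  then show False using assms unfolding Y_event_def by blast
qed

locale finite_pmf_product =
  fixes D :: "'i \<Rightarrow> 'a::finite pmf"
begin

abbreviation N :: "'i \<Rightarrow> 'a measure" where "N i \<equiv> measure_pmf (D i)"
abbreviation M :: "('i \<Rightarrow> 'a) measure" where "M \<equiv> PiM UNIV N"

lemma prob_space_M: "prob_space M"
  by (intro prob_space_PiM) (simp add: measure_pmf.prob_space_axioms)

lemma restrict_measurable: "(\<lambda>e. restrict e J) \<in> measurable M (PiM J N)"
  by (rule measurable_restrict_subset) simp

lemma finite_product_sets:
  assumes "finite J" "S \<subseteq> space (PiM J N)"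
  shows "S \<in> sets (PiM J N)"
proof -
  have "finite S"
    using assms by (intro finite_subset[OF assms(2)]) (simp add: space_PiM finite_PiE)
  moreover have "{x} \<in> sets (PiM J N)" if "x \<in> S" for x
  proof -
    have "x \<in> extensional J" using that assms(2) by (auto simp: space_PiM PiE_def)
    then have "{x} = PiE J (\<lambda>i. {x i})" by (simp add: PiE_singleton)
    then show ?thesis using assms(1) by (simp add: sets_PiM_I_finite)
  qed
  ultimately have "(\<Union>x\<in>S. {x}) \<in> sets (PiM J N)" by (intro sets.finite_UN)
  then show ?thesis by simp
qed

lemma determined_event_preimage:
  assumes "finite J" "determined_by J P"
  obtains S where "S \<in> sets (PiM J N)" "{e \<in> space M. P e} = (\<lambda>e. restrict e J) -` S \<inter> space M"
proof
  define S where "S = {x \<in> space (PiM J N). \<exists>e. restrict e J = x \<and> P e}"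
  have P_restrict: "P e = P e'" if "restrict e J = restrict e' J" for e e'
    using assms(2) fun_cong[OF that] unfolding determined_by_def by (metis restrict_apply')
  show "S \<in> sets (PiM J N)"
    unfolding S_def by (intro finite_product_sets assms(1)) blast
  show "{e \<in> space M. P e} = (\<lambda>e. restrict e J) -` S \<inter> space M"
    using measurable_space[OF restrict_measurable] P_restrict unfolding S_def by blast
qed

lemma determined_event_measurable:
  assumes "finite J" "determined_by J P"
  shows "{e \<in> space M. P e} \<in> sets M"
proof -
  obtain S where "S \<in> sets (PiM J N)" "{e \<in> space M. P e} = (\<lambda>e. restrict e J) -` S \<inter> space M"
    using determined_event_preimage[OF assms] .
  then show ?thesis using measurable_sets[OF restrict_measurable] by simp
qed

lemma indep_coordinates: "prob_space.indep_vars M N (\<lambda>i x. x i) UNIV"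
proof -
  interpret prob_space M by (rule prob_space_M)
  have "distr M M (\<lambda>x. \<lambda>i\<in>UNIV. x i) = M"
    unfolding restrict_UNIV by (simp add: distr_id)
  also have "\<dots> = PiM UNIV (\<lambda>i. distr M (N i) (\<lambda>x. x i))"
    by (intro PiM_cong refl)
       (auto intro!: distr_PiM_component[symmetric] simp: measure_pmf.prob_space_axioms)
  finally show ?thesis
    by (intro indep_vars_iff_distr_eq_PiM'[THEN iffD2]) (auto intro: measurable_component_singleton)
qed

lemma determined_events_indep:
  assumes "finite J1" "finite J2" "J1 \<inter> J2 = {}"
    and "determined_by J1 P1" "determined_by J2 P2"
  shows "measure M ({e \<in> space M. P1 e} \<inter> {e \<in> space M. P2 e})
       = measure M {e \<in> space M. P1 e} * measure M {e \<in> space M. P2 e}"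
proof -
  interpret prob_space M by (rule prob_space_M)
  obtain S1 where S1: "S1 \<in> sets (PiM J1 N)"
    "{e \<in> space M. P1 e} = (\<lambda>e. restrict e J1) -` S1 \<inter> space M"
    using determined_event_preimage[OF assms(1,4)] .
  obtain S2 where S2: "S2 \<in> sets (PiM J2 N)"
    "{e \<in> space M. P2 e} = (\<lambda>e. restrict e J2) -` S2 \<inter> space M"
    using determined_event_preimage[OF assms(2,5)] .
  have "indep_var (PiM J1 N) (\<lambda>e. restrict e J1) (PiM J2 N) (\<lambda>e. restrict e J2)"
    using indep_var_restrict[OF indep_coordinates assms(3)] by simp
  then show ?thesis
    unfolding S1(2) S2(2) indep_var_eq indep_sets2_eq using S1(1) S2(1)
    by (blast intro: sigma_sets.Basic)
qed

end

theorem lemma6: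
  fixes G :: "nat \<Rightarrow> nat \<Rightarrow> nat \<Rightarrow> bit" and a n Lambda :: nat
    and p \<beta> :: real and b :: "nat \<Rightarrow> nat \<Rightarrow> bit"
    and tau1' tau1 tau2' tau2 :: nat
  assumes "0 \<le> p" "p \<le> 1"
    and "anytime_reliable G a n Lambda p \<beta>"
    and "1 \<le> tau1'" "tau1' \<le> tau1" "tau1 < tau2'" "tau2' \<le> tau2"
  shows "measure (erasure_space p)
           (space (erasure_space p) \<inter> Y_event G a n Lambda b tau1' tau1 \<inter> Y_event G a n Lambda b tau2' tau2)
         \<le> 2 powr (- \<beta> * (real (tau1 - tau1' + 1) + real (tau2 - tau2' + 1)))"
proof -
  interpret finite_pmf_product "\<lambda>_::nat \<times> nat. bernoulli_pmf p" .
  interpret prob_space M by (rule prob_space_M)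
  have M: "erasure_space p = M" unfolding erasure_space_def ..
  define fail where "fail tau t = {e \<in> space M. \<not> dec_correct G a n Lambda b e tau t}" for tau t
  define win_fail where "win_fail = {e \<in> space M. \<not> window_decodes G a n Lambda b e tau2' tau2}"
  have fail_determined: "determined_by ({1..t} \<times> {..<n}) (\<lambda>e. \<not> dec_correct G a n Lambda b e tau t)"
    for tau t unfolding determined_by_Not by (rule dec_correct_determined)
  have win_fail_determined:
    "determined_by ({tau2'..tau2} \<times> {..<n}) (\<lambda>e. \<not> window_decodes G a n Lambda b e tau2' tau2)"
    unfolding determined_by_Not by (rule window_decodes_determined)
  have events: "fail tau t \<in> events" "win_fail \<in> events" for tau t
    unfolding fail_def win_fail_def
    by (auto intro: determined_event_measurable[OF _ fail_determined]
                    determined_event_measurable[OF _ win_fail_determined])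
  have reliable: "prob (fail tau t) \<le> 2 powr (- \<beta> * real (t - tau + 1))" if "1 \<le> tau" "tau \<le> t" for tau t
    using assms(3) that unfolding anytime_reliable_def M fail_def by blast
  have "prob (space M \<inter> Y_event G a n Lambda b tau1' tau1 \<inter> Y_event G a n Lambda b tau2' tau2)
      \<le> prob (fail tau1' tau1 \<inter> win_fail)"
    using events Y_event_imp_window_failure
    by (intro finite_measure_mono) (auto simp: fail_def win_fail_def Y_event_def)
  also have "\<dots> = prob (fail tau1' tau1) * prob win_fail"
    unfolding fail_def win_fail_def using assms(6)
    by (intro determined_events_indep[OF _ _ _ fail_determined win_fail_determined]) auto
  also have "\<dots> \<le> 2 powr (- \<beta> * real (tau1 - tau1' + 1)) * 2 powr (- \<beta> * real (tau2 - tau2' + 1))"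
  proof (intro mult_mono)
    have "prob win_fail \<le> prob (fail tau2' tau2)"
      using events dec_correct_imp_window_decodes
      by (intro finite_measure_mono) (auto simp: fail_def win_fail_def)
    then show "prob win_fail \<le> 2 powr (- \<beta> * real (tau2 - tau2' + 1))"
      using reliable[of tau2' tau2] assms(4-7) by linarith
  qed (use reliable[of tau1' tau1] assms(4,5) in auto)
  also have "\<dots> = 2 powr (- \<beta> * (real (tau1 - tau1' + 1) + real (tau2 - tau2' + 1)))"
    by (simp add: powr_add[symmetric] algebra_simps)
  finally show ?thesis unfolding M .
qed

end
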